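(* Assume $h_0\neq0$, $h_1\neq0$ and $h_0x+h_1y>0$ for all $(x,y)\in D$. For each $(a,b)\in\{-,+\}^2$, the number $$t_{ab}=\begin{cases}1,&\text{if } 1\le\alpha_{ab}\ \text{or}\ 1\le2\beta_{ab}-\alpha_{ab},\\ 0,&\text{if } \beta_{ab}\le\alpha_{ab}\le0\ \text{or}\ \beta_{ab}<2\beta_{ab}-\alpha_{ab}\le0,\\ \alpha_{ab},&\text{if } 0<\alpha_{ab}<1,\\ 2\beta_{ab}-\alpha_{ab},&\text{if } 0<2\beta_{ab}-\alpha_{ab}<1\end{cases}$$ is a minimizer of $\varphi_{ab}$ on $[0,1]$. Moreover $$\min_{(x,y)\in D}\psi(x,y)=\min_{(a,b)\in\{-,+\}^2}\varphi_{ab}(t_{ab}).$$ If $(a^*,b^* )$ attains the latter minimum, then the point of $\partial D$ corresponding to parameter $t_{a^*b^*}$ on the side parametrized by $\varphi_{a^*b^*}$ is a minimizer of $\psi$ on $D$.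
   Context: Let $0<\mu_-<\mu_+$ and $0<\sigma_-<\sigma_+$ be real numbers, $D=[\mu_-,\mu_+]\times[\sigma_-,\sigma_+]$, and $h_0,h_1\in\mathbb R$. Write $\mu_M=(\mu_++\mu_-)/2$ and $\sigma_M=(\sigma_++\sigma_-)/2$. For $(x,y)\in D$ let $$\psi(x,y)=\frac{(h_0x+h_1y)^2}{2\mu_Mx+2\sigma_My-\mu_-\mu_+-\sigma_-\sigma_+}.$$ The four sides of $\partial D$ are parametrized by $t\in[0,1]$ through the following functions. For $a\in\{-,+\}$: - $\varphi_{-a}(t)=\psi(\mu_a,\ \sigma_-+t(\sigma_+-\sigma_-))$, the side $x=\mu_a$; - $\alpha_{-a}=-\frac{h_0\mu_a+h_1\sigma_-}{h_1(\sigma_+-\sigma_-)}$; - $\beta_{-a}=-\frac{\mu_a^2+\sigma_-^2}{\sigma_+^2-\sigma_-^2}$. For $b\in\{-,+\}$: - $\varphi_{+b}(t)=\psi(\mu_-+t(\mu_+-\mu_-),\ \sigma_b)$, the side $y=\sigma_b$; - $\alpha_{+b}=-\frac{h_0\mu_-+h_1\sigma_b}{h_0(\mu_+-\mu_-)}$; - $\beta_{+b}=-\frac{\mu_-^2+\sigma_b^2}{\mu_+^2-\mu_-^2}$. *)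

theory Defs
  imports Complex_Main
begin

datatype sgn = Minus | Plus

fun sel :: "sgn \<Rightarrow> real \<Rightarrow> real \<Rightarrow> real" where
  "sel Minus u v = u"
| "sel Plus u v = v"

definition psi :: "real \<Rightarrow> real \<Rightarrow> real \<Rightarrow> real \<Rightarrow> real \<Rightarrow> real \<Rightarrow> real \<Rightarrow> real \<Rightarrow> real" where
  "psi mm mp sm sp h0 h1 x y =
     (h0 * x + h1 * y)^2 /
     (2 * ((mp + mm) / 2) * x + 2 * ((sp + sm) / 2) * y - mm * mp - sm * sp)"

text \<open>Parametrization of the four sides of the boundary of D:
  side (Minus, a): x = mu_a, y = sigma_- + t (sigma_+ - sigma_-);
  side (Plus, b):  x = mu_- + t (mu_+ - mu_-), y = sigma_b.\<close>
fun side_pt :: "real \<Rightarrow> real \<Rightarrow> real \<Rightarrow> real \<Rightarrow> sgn \<Rightarrow> sgn \<Rightarrow> real \<Rightarrow> real \<times> real" where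
  "side_pt mm mp sm sp Minus a t = (sel a mm mp, sm + t * (sp - sm))"
| "side_pt mm mp sm sp Plus b t = (mm + t * (mp - mm), sel b sm sp)"

definition phi :: "real \<Rightarrow> real \<Rightarrow> real \<Rightarrow> real \<Rightarrow> real \<Rightarrow> real \<Rightarrow> sgn \<Rightarrow> sgn \<Rightarrow> real \<Rightarrow> real" where
  "phi mm mp sm sp h0 h1 i j t =
     (case side_pt mm mp sm sp i j t of (x, y) \<Rightarrow> psi mm mp sm sp h0 h1 x y)"

fun alpha :: "real \<Rightarrow> real \<Rightarrow> real \<Rightarrow> real \<Rightarrow> real \<Rightarrow> real \<Rightarrow> sgn \<Rightarrow> sgn \<Rightarrow> real" where
  "alpha mm mp sm sp h0 h1 Minus a = - (h0 * sel a mm mp + h1 * sm) / (h1 * (sp - sm))"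
| "alpha mm mp sm sp h0 h1 Plus b = - (h0 * mm + h1 * sel b sm sp) / (h0 * (mp - mm))"

fun beta :: "real \<Rightarrow> real \<Rightarrow> real \<Rightarrow> real \<Rightarrow> sgn \<Rightarrow> sgn \<Rightarrow> real" where
  "beta mm mp sm sp Minus a = - ((sel a mm mp)^2 + sm^2) / (sp^2 - sm^2)"
| "beta mm mp sm sp Plus b = - (mm^2 + (sel b sm sp)^2) / (mp^2 - mm^2)"

text \<open>The candidate minimizer t_ab, with the four cases of the paper tried in order
  (under the standing assumptions beta < 0, so the cases do not overlap).\<close>
definition tcand :: "real \<Rightarrow> real \<Rightarrow> real" where
  "tcand al be =
     (if 1 \<le> al \<or> 1 \<le> 2 * be - al then 1
      else if (be \<le> al \<and> al \<le> 0) \<or> (be < 2 * be - al \<and> 2 * be - al \<le> 0) then 0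
      else if 0 < al \<and> al < 1 then al
      else 2 * be - al)"

definition tmin :: "real \<Rightarrow> real \<Rightarrow> real \<Rightarrow> real \<Rightarrow> real \<Rightarrow> real \<Rightarrow> sgn \<Rightarrow> sgn \<Rightarrow> real" where
  "tmin mm mp sm sp h0 h1 i j =
     tcand (alpha mm mp sm sp h0 h1 i j) (beta mm mp sm sp i j)"

end

theory Submission imports Defs begin

(* Write den(x,y) for the (affine) denominator of psi; it is positive on D.
   (1) On every side of D the numerator and the denominator of psi are affine in the
       side parameter t, so phi_ab(t) = K * (t - alpha_ab)^2 / (t - beta_ab) with K >= 0
       and beta_ab < 0.  A one-variable argument about (t - al)^2 / (t - be), be < 0,
       shows that the clamped critical point tcand al be minimizes it on [0,1].
   (2) Moving from (x,y) in the direction +-(h1, -h0) keeps the numerator h0 x + h1 y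
       fixed while den changes linearly; going in the direction in which den does not
       decrease until the boundary is hit, psi does not increase.  Hence every value of
       psi on D is bounded below by a value of some phi_ab on [0,1]. *)

section \<open>Minimizing (t - al)^2 / (t - be) on [0,1]\<close>

text \<open>With p = t - be, q = u - be, a = al - be the difference of the two cross-multiplied
  ratios factors as (p - q)(pq - a^2); its sign decides the comparison.\<close>
lemma shifted_ratio_le:
  fixes p q a :: real
  assumes "0 < p" "0 < q" "0 \<le> (p - q) * (p * q - a^2)"
  shows "(q - a)^2 / q \<le> (p - a)^2 / p"
proof -
  have "(p - a)^2 * q - (q - a)^2 * p = (p - q) * (p * q - a^2)"
    by (simp add: power2_eq_square algebra_simps)
  then have "(q - a)^2 * p \<le> (p - a)^2 * q" using assms(3) by linarith
  then show ?thesis using assms(1,2) by (simp add: divide_simps)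
qed

text \<open>The candidate tcand al be is the clamp to [0,1] of the point where t - be = |al - be|,
  i.e. of the unconstrained minimizer of (t - al)^2 / (t - be).\<close>
lemma tcand_cases:
  fixes al be :: real
  assumes "be < 0"
  defines "u \<equiv> tcand al be"
  shows "(u = 1 \<and> 1 - be \<le> \<bar>al - be\<bar>) \<or> (u = 0 \<and> \<bar>al - be\<bar> \<le> - be)
         \<or> (0 \<le> u \<and> u \<le> 1 \<and> u - be = \<bar>al - be\<bar>)"
  using assms unfolding u_def tcand_def by (auto split: if_splits)

lemma tcand_minimizes:
  fixes al be t :: real
  assumes be: "be < 0" and t: "0 \<le> t" "t \<le> 1"
  defines "u \<equiv> tcand al be"
  shows "0 \<le> u \<and> u \<le> 1 \<and> (u - al)^2 / (u - be) \<le> (t - al)^2 / (t - be)"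
proof -
  define p q a where "p = t - be" and "q = u - be" and "a = al - be"
  have p: "0 < p" using t be p_def by simp
  have u01: "0 \<le> u \<and> u \<le> 1" using tcand_cases[OF be, of al] unfolding u_def by auto
  then have q: "0 < q" using be q_def by simp
  have "0 \<le> (p - q) * (p * q - a^2)"
    using tcand_cases[OF be, of al, folded u_def, folded q_def a_def]
  proof (elim disjE conjE)
    assume "u = 1" "1 - be \<le> \<bar>a\<bar>"
    then have "p \<le> q" "q \<le> \<bar>a\<bar>" using t p_def q_def by auto
    then have "p * q \<le> \<bar>a\<bar> * \<bar>a\<bar>" using p q by (intro mult_mono) auto
    then show ?thesis using \<open>p \<le> q\<close> by (simp add: mult_nonpos_nonpos power2_eq_square)
  next
    assume "u = 0" "\<bar>a\<bar> \<le> - be"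
    then have "q \<le> p" "\<bar>a\<bar> \<le> q" using t p_def q_def by auto
    then have "\<bar>a\<bar> * \<bar>a\<bar> \<le> p * q" using q by (intro mult_mono) auto
    then show ?thesis using \<open>q \<le> p\<close> by (simp add: power2_eq_square)
  next
    assume "q = \<bar>a\<bar>"
    then have "(p - q) * (p * q - a^2) = q * (p - q)^2" by (simp add: power2_eq_square algebra_simps)
    then show ?thesis using q by simp
  qed
  then have "(q - a)^2 / q \<le> (p - a)^2 / p" using p q by (intro shifted_ratio_le)
  then show ?thesis using u01 unfolding p_def q_def a_def by simp
qed

lemma affine_ratio_scaled:
  fixes N Q :: "real \<Rightarrow> real"
  assumes "\<And>t. N t = c * (t - al)" "\<And>t. Q t = d * (t - be)" "0 < d"
  shows "\<exists>K \<ge> 0. \<forall>t. (N t)^2 / Q t = K * ((t - al)^2 / (t - be))"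
  using assms by (intro exI[of _ "c^2 / d"]) (auto simp: power_mult_distrib)

section \<open>Leaving a box along a ray\<close>

lemma ray_exit_interval:
  fixes x e a b :: real
  assumes "a \<le> x" "x \<le> b" "e \<noteq> 0"
  obtains s where "0 \<le> s" "\<And>r. 0 \<le> r \<Longrightarrow> r \<le> s \<Longrightarrow> a \<le> x + r * e \<and> x + r * e \<le> b"
    "x + s * e = a \<or> x + s * e = b"
proof (cases "e > 0")
  case True
  show ?thesis
  proof (rule that[of "(b - x) / e"])
    fix r assume "0 \<le> r" "r \<le> (b - x) / e"
    then show "a \<le> x + r * e \<and> x + r * e \<le> b"
      using True assms by (simp add: pos_le_divide_eq add_increasing2)
  qed (use True assms in auto)
next
  case False
  then have e: "e < 0" using assms by simp
  show ?thesis
  proof (rule that[of "(a - x) / e"])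
    fix r assume "0 \<le> r" "r \<le> (a - x) / e"
    then have "a - x \<le> r * e" "r * e \<le> 0"
      using e by (simp_all add: neg_le_divide_eq mult.commute mult_nonpos_nonneg)
    then show "a \<le> x + r * e \<and> x + r * e \<le> b" using assms by linarith
  qed (use e assms in \<open>auto simp: divide_nonpos_neg\<close>)
qed

lemma ray_exit_box:
  fixes x y e1 e2 mm mp sm sp :: real
  assumes "mm \<le> x" "x \<le> mp" "sm \<le> y" "y \<le> sp" "e1 \<noteq> 0" "e2 \<noteq> 0"
  obtains s where "0 \<le> s" "mm \<le> x + s * e1" "x + s * e1 \<le> mp" "sm \<le> y + s * e2" "y + s * e2 \<le> sp"
    "x + s * e1 = mm \<or> x + s * e1 = mp \<or> y + s * e2 = sm \<or> y + s * e2 = sp"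
proof -
  obtain s1 where s1: "0 \<le> s1" "\<And>r. 0 \<le> r \<Longrightarrow> r \<le> s1 \<Longrightarrow> mm \<le> x + r * e1 \<and> x + r * e1 \<le> mp"
     "x + s1 * e1 = mm \<or> x + s1 * e1 = mp" using ray_exit_interval[of mm x mp e1] assms by blast
  obtain s2 where s2: "0 \<le> s2" "\<And>r. 0 \<le> r \<Longrightarrow> r \<le> s2 \<Longrightarrow> sm \<le> y + r * e2 \<and> y + r * e2 \<le> sp"
     "y + s2 * e2 = sm \<or> y + s2 * e2 = sp" using ray_exit_interval[of sm y sp e2] assms by blast
  show ?thesis
  proof (cases "s1 \<le> s2")
    case True
    then show ?thesis using that[of s1] s1 s2 by auto
  next
    case False
    then show ?thesis using that[of s2] s1 s2 by auto
  qed
qed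

section \<open>The rectangle problem\<close>

text \<open>A corner coordinate is a root of X^2 - (mp + mm) X + mm mp; this turns the constant
  term of the denominator on a side into a sum of squares.\<close>
lemma sel_quadratic: "0 < mm \<Longrightarrow> (mp + mm) * sel a mm mp - mm * mp = (sel a mm mp)^2"
  by (cases a) (auto simp: power2_eq_square algebra_simps)

lemma UNIV_sgn: "(UNIV :: sgn set) = {Minus, Plus}"
  using sgn.exhaust by auto

lemma finite_sides: "finite {f i j | i j. True}" for f :: "sgn \<Rightarrow> sgn \<Rightarrow> 'a"
proof -
  have "{f i j | i j. True} = (\<lambda>(i, j). f i j) ` ({Minus, Plus} \<times> {Minus, Plus})"
    by (auto simp flip: UNIV_sgn)
  then show ?thesis by simp
qed

locale rectangle =
  fixes mm mp sm sp h0 h1 :: real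
  assumes mm_pos: "0 < mm" and mm_less: "mm < mp" and sm_pos: "0 < sm" and sm_less: "sm < sp"
    and h0_nz: "h0 \<noteq> 0" and h1_nz: "h1 \<noteq> 0"
begin

abbreviation "Psi \<equiv> psi mm mp sm sp h0 h1"
abbreviation "Phi \<equiv> phi mm mp sm sp h0 h1"
abbreviation "Side \<equiv> side_pt mm mp sm sp"
abbreviation "Tmin \<equiv> tmin mm mp sm sp h0 h1"
abbreviation "Rect \<equiv> {mm..mp} \<times> {sm..sp}"

definition den :: "real \<Rightarrow> real \<Rightarrow> real" where
  "den x y = 2 * ((mp + mm) / 2) * x + 2 * ((sp + sm) / 2) * y - mm * mp - sm * sp"

lemma Psi_eq: "Psi x y = (h0 * x + h1 * y)^2 / den x y"
  unfolding psi_def den_def ..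

text \<open>den(x,y) = (mu_+ + mu_-)(x - mu_-) + (sigma_+ + sigma_-)(y - sigma_-) + mu_-^2 + sigma_-^2 > 0.\<close>
lemma den_pos:
  assumes "mm \<le> x" "sm \<le> y"
  shows "0 < den x y"
proof -
  have "(mp + mm) * mm \<le> (mp + mm) * x" "(sp + sm) * sm \<le> (sp + sm) * y"
    using assms mm_pos mm_less sm_pos sm_less by (auto intro: mult_left_mono)
  moreover have "0 < mm * mm + sm * sm" using mm_pos sm_pos by (simp add: add_pos_pos)
  ultimately show ?thesis unfolding den_def by (simp add: field_simps)
qed

lemma beta_neg: "beta mm mp sm sp i j < 0"
proof -
  have "sm^2 < sp^2" "mm^2 < mp^2"
    using mm_pos mm_less sm_pos sm_less by (simp_all add: power_strict_mono)
  moreover have "0 < (sel j mm mp)^2 + sm^2" "0 < mm^2 + (sel j sm sp)^2"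
    using mm_pos sm_pos by (simp_all add: add_nonneg_pos add_pos_nonneg)
  ultimately show ?thesis by (cases i) (auto simp: divide_neg_pos)
qed

text \<open>On each side, numerator and denominator are affine in t with roots alpha and beta,
  so phi_ab is a nonnegative multiple of (t - alpha_ab)^2 / (t - beta_ab).\<close>
lemma Phi_scaled:
  "\<exists>K \<ge> 0. \<forall>t. Phi i j t = K * ((t - alpha mm mp sm sp h0 h1 i j)^2 / (t - beta mm mp sm sp i j))"
proof -
  have sq: "sm^2 < sp^2" "mm^2 < mp^2"
    using mm_pos mm_less sm_pos sm_less by (simp_all add: power_strict_mono)
  show ?thesis
  proof (cases i)
    case Minus
    let ?mu = "sel j mm mp" and ?y = "\<lambda>t. sm + t * (sp - sm)"
    have mu2: "(mp + mm) * ?mu - mm * mp = ?mu^2" using mm_pos by (rule sel_quadratic)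
    have num: "h0 * ?mu + h1 * ?y t = h1 * (sp - sm) * (t - alpha mm mp sm sp h0 h1 i j)" for t
      using Minus h1_nz sm_less by (simp add: field_simps)
    have den: "den ?mu (?y t) = (sp^2 - sm^2) * (t - beta mm mp sm sp i j)" for t
    proof -
      have "den ?mu (?y t) = ((mp + mm) * ?mu - mm * mp) + sm^2 + t * (sp^2 - sm^2)"
        unfolding den_def by (simp add: field_simps power2_eq_square)
      also have "\<dots> = (sp^2 - sm^2) * (t - beta mm mp sm sp i j)"
        using Minus sq unfolding mu2 by (simp add: field_simps)
      finally show ?thesis .
    qed
    have "0 < sp^2 - sm^2" using sq by simp
    from affine_ratio_scaled[OF num den this] show ?thesis using Minus by (simp add: phi_def Psi_eq)
  next
    case Plus
    let ?nu = "sel j sm sp" and ?x = "\<lambda>t. mm + t * (mp - mm)"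
    have nu2: "(sp + sm) * ?nu - sm * sp = ?nu^2" using sm_pos by (rule sel_quadratic)
    have num: "h0 * ?x t + h1 * ?nu = h0 * (mp - mm) * (t - alpha mm mp sm sp h0 h1 i j)" for t
      using Plus h0_nz mm_less by (simp add: field_simps)
    have den: "den (?x t) ?nu = (mp^2 - mm^2) * (t - beta mm mp sm sp i j)" for t
    proof -
      have "den (?x t) ?nu = ((sp + sm) * ?nu - sm * sp) + mm^2 + t * (mp^2 - mm^2)"
        unfolding den_def by (simp add: field_simps power2_eq_square)
      also have "\<dots> = (mp^2 - mm^2) * (t - beta mm mp sm sp i j)"
        using Plus sq unfolding nu2 by (simp add: field_simps)
      finally show ?thesis .
    qed
    have "0 < mp^2 - mm^2" using sq by simp
    from affine_ratio_scaled[OF num den this] show ?thesis using Plus by (simp add: phi_def Psi_eq)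
  qed
qed

lemma Tmin_minimizes:
  shows "Tmin i j \<in> {0..1}" and "t \<in> {0..1} \<Longrightarrow> Phi i j (Tmin i j) \<le> Phi i j t"
proof -
  obtain K where K: "K \<ge> 0"
    "\<And>t. Phi i j t = K * ((t - alpha mm mp sm sp h0 h1 i j)^2 / (t - beta mm mp sm sp i j))"
    using Phi_scaled by blast
  note opt = tcand_minimizes[OF beta_neg[of i j], of _ "alpha mm mp sm sp h0 h1 i j"]
  show "Tmin i j \<in> {0..1}" using opt[of 0] unfolding tmin_def by simp
  assume "t \<in> {0..1}"
  then show "Phi i j (Tmin i j) \<le> Phi i j t"
    unfolding K(2) tmin_def using opt[of t] by (intro mult_left_mono[OF _ K(1)]) auto
qed

lemma Side_in_Rect: "t \<in> {0..1} \<Longrightarrow> Side i j t \<in> Rect"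
proof -
  assume "t \<in> {0..1}"
  then have "0 \<le> t * (sp - sm)" "t * (sp - sm) \<le> sp - sm" "0 \<le> t * (mp - mm)" "t * (mp - mm) \<le> mp - mm"
    using mm_less sm_less by (auto simp: mult_left_le_one_le)
  then show ?thesis using mm_less sm_less
    by (cases i; cases j) (auto simp: algebra_simps)
qed

lemma Psi_Side: "Psi (fst (Side i j t)) (snd (Side i j t)) = Phi i j t"
  unfolding phi_def by (simp add: case_prod_beta)

lemma boundary_on_side:
  assumes "(x, y) \<in> Rect" "x = mm \<or> x = mp \<or> y = sm \<or> y = sp"
  shows "\<exists>i j t. t \<in> {0..1} \<and> Side i j t = (x, y)"
proof -
  define ty where "ty = (y - sm) / (sp - sm)"
  define tx where "tx = (x - mm) / (mp - mm)"
  have ty: "ty \<in> {0..1}" "sm + ty * (sp - sm) = y"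
    unfolding ty_def using assms(1) sm_less by (auto simp: field_simps)
  have tx: "tx \<in> {0..1}" "mm + tx * (mp - mm) = x"
    unfolding tx_def using assms(1) mm_less by (auto simp: field_simps)
  from assms(2) show ?thesis
  proof (elim disjE)
    assume "x = mm" then show ?thesis using ty by (intro exI[of _ Minus] exI[of _ Minus] exI[of _ ty]) auto
  next
    assume "x = mp" then show ?thesis using ty by (intro exI[of _ Minus] exI[of _ Plus] exI[of _ ty]) auto
  next
    assume "y = sm" then show ?thesis using tx by (intro exI[of _ Plus] exI[of _ Minus] exI[of _ tx]) auto
  next
    assume "y = sp" then show ?thesis using tx by (intro exI[of _ Plus] exI[of _ Plus] exI[of _ tx]) auto
  qed
qed

text \<open>Reduction to the boundary: moving along +-(h1, -h0) fixes the numerator of psi and,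
  for the right sign, does not decrease its denominator until the boundary is reached.\<close>
lemma boundary_bound:
  assumes "(x, y) \<in> Rect"
  shows "\<exists>i j t. t \<in> {0..1} \<and> Phi i j t \<le> Psi x y"
proof -
  define c where "c = (mp + mm) * h1 - (sp + sm) * h0"
  define sg :: real where "sg = (if c \<ge> 0 then 1 else -1)"
  have sgc: "0 \<le> sg * c" and sg0: "sg \<noteq> 0" unfolding sg_def by auto
  obtain s where s: "0 \<le> s" "mm \<le> x + s * (sg * h1)" "x + s * (sg * h1) \<le> mp"
    "sm \<le> y + s * (- sg * h0)" "y + s * (- sg * h0) \<le> sp"
    "x + s * (sg * h1) = mm \<or> x + s * (sg * h1) = mp \<or> y + s * (- sg * h0) = sm \<or> y + s * (- sg * h0) = sp"
    using ray_exit_box[of mm x mp sm y sp "sg * h1" "- sg * h0"] assms h0_nz h1_nz sg0 by auto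
  define x' y' where "x' = x + s * (sg * h1)" and "y' = y + s * (- sg * h0)"
  have num: "h0 * x' + h1 * y' = h0 * x + h1 * y" unfolding x'_def y'_def by (simp add: algebra_simps)
  have "den x' y' = den x y + s * (sg * c)" unfolding den_def x'_def y'_def c_def by (simp add: field_simps)
  then have "den x y \<le> den x' y'" using sgc s(1) by simp
  moreover have "0 < den x y" using assms by (intro den_pos) auto
  ultimately have le: "Psi x' y' \<le> Psi x y" unfolding Psi_eq num by (intro divide_left_mono) auto
  obtain i j t where "t \<in> {0..1}" "Side i j t = (x', y')"
    using boundary_on_side[of x' y'] s unfolding x'_def y'_def by auto
  then show ?thesis using le Psi_Side[of i j t] by auto
qed

lemma Psi_ge_side_min:
  assumes "(x, y) \<in> Rect"
  shows "\<exists>i j. Phi i j (Tmin i j) \<le> Psi x y"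
  using boundary_bound[OF assms] Tmin_minimizes(2) by (meson order_trans)

end

theorem mainTheorem6:
  fixes mm mp sm sp h0 h1 :: real
  defines "D \<equiv> {mm..mp} \<times> {sm..sp}"
  defines "m \<equiv> Min {phi mm mp sm sp h0 h1 i j (tmin mm mp sm sp h0 h1 i j) | i j. True}"
  assumes "0 < mm" "mm < mp" "0 < sm" "sm < sp"
    and "h0 \<noteq> 0" "h1 \<noteq> 0"
    and "\<forall>(x, y) \<in> D. h0 * x + h1 * y > 0"
  shows "(\<forall>i j. tmin mm mp sm sp h0 h1 i j \<in> {0..1} \<and>
            (\<forall>t \<in> {0..1}. phi mm mp sm sp h0 h1 i j (tmin mm mp sm sp h0 h1 i j)
                            \<le> phi mm mp sm sp h0 h1 i j t))
    \<and> (\<exists>(x, y) \<in> D. psi mm mp sm sp h0 h1 x y = m)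
    \<and> (\<forall>(x, y) \<in> D. m \<le> psi mm mp sm sp h0 h1 x y)
    \<and> (\<forall>i j. phi mm mp sm sp h0 h1 i j (tmin mm mp sm sp h0 h1 i j) = m \<longrightarrow>
            (let p = side_pt mm mp sm sp i j (tmin mm mp sm sp h0 h1 i j) in
               p \<in> D \<and> (\<forall>(x, y) \<in> D. psi mm mp sm sp h0 h1 (fst p) (snd p) \<le> psi mm mp sm sp h0 h1 x y)))"
proof -
  interpret rectangle mm mp sm sp h0 h1 using assms(3-8) by unfold_locales
  have m_le: "m \<le> Phi i j (Tmin i j)" for i j
    unfolding m_def by (rule Min_le[OF finite_sides]) blast
  have "m \<in> {Phi i j (Tmin i j) | i j. True}"
    unfolding m_def by (rule Min_in[OF finite_sides]) blast
  then obtain i0 j0 where m_eq: "m = Phi i0 j0 (Tmin i0 j0)" by blast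
  have lower: "m \<le> Psi x y" if xy: "(x, y) \<in> D" for x y
  proof -
    obtain i j where "Phi i j (Tmin i j) \<le> Psi x y" using Psi_ge_side_min xy unfolding D_def by blast
    then show ?thesis using m_le order_trans by blast
  qed
  have side_in: "Side i j (Tmin i j) \<in> D" for i j
    unfolding D_def using Side_in_Rect Tmin_minimizes(1) by blast
  have attained: "\<exists>(x, y) \<in> D. Psi x y = m"
    using side_in[of i0 j0] Psi_Side[of i0 j0 "Tmin i0 j0"] unfolding m_eq by (intro bexI) auto
  have optimal: "Side i j (Tmin i j) \<in> D \<and> (\<forall>(x, y) \<in> D. Psi (fst (Side i j (Tmin i j)))
      (snd (Side i j (Tmin i j))) \<le> Psi x y)" if "Phi i j (Tmin i j) = m" for i j
    using side_in Psi_Side[of i j "Tmin i j"] that lower by auto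
  show ?thesis
    using Tmin_minimizes lower attained optimal by (auto simp: Let_def)
qed

end
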